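(* In the setting of the context, let $J_1,J_2$ be the compatible pair of Poisson vector fields $J_i=\alpha_i(\widehat e_2+\mu_i\widehat e_3)$ on an open set $U$ with respect to which $\dot x=v(x)$ is locally bi-Hamiltonian, as in the context, and let $\phi=\alpha_1\alpha_2(\mu_2-\mu_1)/\Vert v\Vert$. Let $\boldsymbol J_i$ be the 1-forms metrically dual to $J_i$ and let $\boldsymbol\beta$ be the 1-form with $d\boldsymbol J_i=\boldsymbol\beta\wedge\boldsymbol J_i$ for $i=1,2$ (it exists and is unique since $\boldsymbol J_1\wedge\boldsymbol J_2\neq0$ and the pair is compatible). Then $$\iota_{\widehat e_1}\boldsymbol\beta=\iota_{\widehat e_1}\big(d\ln|\phi|\big).$$
   Context: Setting: $M$ is an oriented three-dimensional manifold with Riemannian metric $g$; $\nabla$, $\nabla\times$, $\times$ denote gradient, curl and cross product. A Poisson vector field is $J$ with $J\cdot(\nabla\times J)=0$; compatible means $J_1+J_2$ is also Poisson. $v$ is nowhere vanishing, $\widehat e_1=v/\Vert v\Vert$ extended to a local oriented orthonormal frame $(\widehat e_1,\widehat e_2,\widehat e_3)$, $\widehat e_3=\widehat e_1\times\widehat e_2$, with $[\widehat e_i,\widehat e_j]=C_{ij}^k\widehat e_k$. The pair is given by nowhere-equal solutions $\mu_1,\mu_2$ of $\widehat e_1\cdot\nabla\mu=-C_{31}^{2}-\mu(C_{31}^{3}+C_{12}^{2})-\mu^{2}C_{12}^{3}$ and nowhere-vanishing $\alpha_1,\alpha_2$ with $\widehat e_1\cdot\nabla\ln|\alpha_i/\Vert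 v\Vert|=C_{31}^{3}+\mu_iC_{12}^{3}$; there are local functions $H_1,H_2$ with $v=J_1\times\nabla H_2=J_2\times\nabla H_1$. *)

theory Defs
  imports "HOL-Analysis.Analysis"
begin

text \<open>Local coordinate model: an open set U of R^3 (a chart of the oriented 3-manifold M,
  with the coordinate orientation), a Riemannian metric g given by its matrix field,
  vector fields U -> R^3, 1-forms as covector fields (w applied to X is w p \<bullet> X p).\<close>

definition gip :: "(real^3 \<Rightarrow> real^3^3) \<Rightarrow> real^3 \<Rightarrow> real^3 \<Rightarrow> real^3 \<Rightarrow> real" where
  "gip g p X Y = X \<bullet> (g p *v Y)"

definition gnorm :: "(real^3 \<Rightarrow> real^3^3) \<Rightarrow> real^3 \<Rightarrow> real^3 \<Rightarrow> real" where
  "gnorm g p X = sqrt (gip g p X X)"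

definition riemannian_metric :: "(real^3) set \<Rightarrow> (real^3 \<Rightarrow> real^3^3) \<Rightarrow> bool" where
  "riemannian_metric U g \<longleftrightarrow> (\<forall>p\<in>U. transpose (g p) = g p \<and>
      (\<forall>x. x \<noteq> 0 \<longrightarrow> 0 < gip g p x x) \<and> g differentiable (at p))"

text \<open>Riemannian cross product: g(X \<times>_g Y, Z) = vol_g(X,Y,Z).\<close>
definition gcross :: "(real^3 \<Rightarrow> real^3^3) \<Rightarrow> real^3 \<Rightarrow> real^3 \<Rightarrow> real^3 \<Rightarrow> real^3" where
  "gcross g p X Y = sqrt (det (g p)) *\<^sub>R (matrix_inv (g p) *v cross3 X Y)"

definition dirderiv :: "(real^3 \<Rightarrow> real) \<Rightarrow> (real^3 \<Rightarrow> real^3) \<Rightarrow> real^3 \<Rightarrow> real" where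
  "dirderiv f X p = frechet_derivative f (at p) (X p)"

definition vdirderiv :: "(real^3 \<Rightarrow> real^3) \<Rightarrow> (real^3 \<Rightarrow> real^3) \<Rightarrow> real^3 \<Rightarrow> real^3" where
  "vdirderiv Y X p = frechet_derivative Y (at p) (X p)"

text \<open>Lie bracket [X,Y] (so that [X,Y]f = X(Yf) - Y(Xf)).\<close>
definition lie_bracket :: "(real^3 \<Rightarrow> real^3) \<Rightarrow> (real^3 \<Rightarrow> real^3) \<Rightarrow> real^3 \<Rightarrow> real^3" where
  "lie_bracket X Y p = vdirderiv Y X p - vdirderiv X Y p"

definition flat :: "(real^3 \<Rightarrow> real^3^3) \<Rightarrow> (real^3 \<Rightarrow> real^3) \<Rightarrow> real^3 \<Rightarrow> real^3" where
  "flat g J p = g p *v J p"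

definition d1 :: "(real^3 \<Rightarrow> real^3) \<Rightarrow> (real^3 \<Rightarrow> real^3) \<Rightarrow> (real^3 \<Rightarrow> real^3) \<Rightarrow> real^3 \<Rightarrow> real" where
  "d1 w X Y p = dirderiv (\<lambda>q. w q \<bullet> Y q) X p - dirderiv (\<lambda>q. w q \<bullet> X q) Y p
                 - w p \<bullet> lie_bracket X Y p"

definition wedge1 :: "(real^3 \<Rightarrow> real^3) \<Rightarrow> (real^3 \<Rightarrow> real^3) \<Rightarrow> (real^3 \<Rightarrow> real^3) \<Rightarrow> (real^3 \<Rightarrow> real^3) \<Rightarrow> real^3 \<Rightarrow> real" where
  "wedge1 b w X Y p = (b p \<bullet> X p) * (w p \<bullet> Y p) - (b p \<bullet> Y p) * (w p \<bullet> X p)"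

definition dform_eq_wedge :: "(real^3) set \<Rightarrow> (real^3 \<Rightarrow> real^3) \<Rightarrow> (real^3 \<Rightarrow> real^3) \<Rightarrow> bool" where
  "dform_eq_wedge U w b \<longleftrightarrow> (\<forall>X Y. (\<forall>p\<in>U. X differentiable (at p) \<and> Y differentiable (at p)) \<longrightarrow>
      (\<forall>p\<in>U. d1 w X Y p = wedge1 b w X Y p))"

end

theory Submission
  imports Defs
begin

text \<open>Evaluating \<open>d\<^bold>J\<^sub>1 = \<^bold>\<beta> \<and> \<^bold>J\<^sub>1\<close> on the pair \<open>(\<^bold>e\<^sub>1, \<^bold>e\<^sub>2)\<close> gives
  \<open>\<^bold>\<beta>(\<^bold>e\<^sub>1) = \<^bold>e\<^sub>1 ln |\<alpha>\<^sub>1| - C\<^sub>1\<^sub>2\<^sup>2 - \<mu>\<^sub>1 C\<^sub>1\<^sub>2\<^sup>3\<close>, because \<open>\<^bold>J\<^sub>1\<close> vanishes on \<open>\<^bold>e\<^sub>1\<close> and takes the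
  values \<open>\<alpha>\<^sub>1\<close>, \<open>\<alpha>\<^sub>1\<mu>\<^sub>1\<close> on \<open>\<^bold>e\<^sub>2\<close>, \<open>\<^bold>e\<^sub>3\<close>. On the other side, \<open>\<phi> = \<alpha>\<^sub>1 (\<alpha>\<^sub>2/\<Vert>v\<Vert>) (\<mu>\<^sub>2 - \<mu>\<^sub>1)\<close>,
  so \<open>\<^bold>e\<^sub>1 ln |\<phi>|\<close> splits into three logarithmic derivatives: the middle one is given by
  the transport equation for \<open>\<alpha>\<^sub>2\<close>, and subtracting the two Riccati equations and dividing
  by \<open>\<mu>\<^sub>2 - \<mu>\<^sub>1\<close> gives \<open>\<^bold>e\<^sub>1 ln |\<mu>\<^sub>2 - \<mu>\<^sub>1| = -C\<^sub>3\<^sub>1\<^sup>3 - C\<^sub>1\<^sub>2\<^sup>2 - (\<mu>\<^sub>1 + \<mu>\<^sub>2) C\<^sub>1\<^sub>2\<^sup>3\<close>.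
  The sum is the value of \<open>\<^bold>\<beta>(\<^bold>e\<^sub>1)\<close>.\<close>

lemma dirderiv_has_derivative:
  assumes "(f has_derivative F) (at p)"
  shows "dirderiv f X p = F (X p)"
  using frechet_derivative_at[OF assms] by (simp add: dirderiv_def)

lemma dirderiv_transform_within_open:
  assumes "f differentiable (at p)" "open U" "p \<in> U" "\<And>q. q \<in> U \<Longrightarrow> f q = h q"
  shows "dirderiv h X p = dirderiv f X p"
  using frechet_derivative_transform_within_open[OF assms] by (simp add: dirderiv_def)

lemma dirderiv_mult:
  fixes f h :: "real^3 \<Rightarrow> real"
  assumes "f differentiable (at p)" "h differentiable (at p)"
  shows "dirderiv (\<lambda>q. f q * h q) X p = f p * dirderiv h X p + dirderiv f X p * h p"
  using dirderiv_has_derivative[OF has_derivative_mult[OF assms[unfolded frechet_derivative_works]]]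
  by (simp add: dirderiv_def)

lemma dirderiv_diff:
  fixes f h :: "real^3 \<Rightarrow> real"
  assumes "f differentiable (at p)" "h differentiable (at p)"
  shows "dirderiv (\<lambda>q. f q - h q) X p = dirderiv f X p - dirderiv h X p"
  using dirderiv_has_derivative[OF has_derivative_diff[OF assms[unfolded frechet_derivative_works]]]
  by (simp add: dirderiv_def)

lemma has_derivative_ln_abs:
  fixes f :: "'a::real_normed_vector \<Rightarrow> real"
  assumes "(f has_derivative F) (at p)" "f p \<noteq> 0"
  shows "((\<lambda>q. ln \<bar>f q\<bar>) has_derivative (\<lambda>h. F h / f p)) (at p)"
proof -
  have ln_abs: "ln \<bar>x\<bar> = ln (x\<^sup>2) / 2" for x :: real
  proof (cases "x = 0")
    case False
    then have "ln (\<bar>x\<bar>\<^sup>2) = 2 * ln \<bar>x\<bar>"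
      by (subst ln_realpow) auto
    then show ?thesis by simp
  qed simp
  have "0 < (f p)\<^sup>2"
    using assms(2) by simp
  then have "((\<lambda>q. ln ((f q)\<^sup>2) / 2) has_derivative (\<lambda>h. F h / f p)) (at p)"
    using assms by (auto intro!: derivative_eq_intros simp: power2_eq_square field_simps)
  then show ?thesis by (simp add: ln_abs)
qed

lemma dirderiv_ln_abs:
  fixes f :: "real^3 \<Rightarrow> real"
  assumes "f differentiable (at p)" "f p \<noteq> 0"
  shows "dirderiv (\<lambda>q. ln \<bar>f q\<bar>) X p = dirderiv f X p / f p"
  using dirderiv_has_derivative[OF has_derivative_ln_abs[OF assms(1)[unfolded frechet_derivative_works] assms(2)]]
  by (simp add: dirderiv_def)

lemma dirderiv_ln_abs_mult:
  fixes f h :: "real^3 \<Rightarrow> real"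
  assumes "f differentiable (at p)" "h differentiable (at p)" "f p \<noteq> 0" "h p \<noteq> 0"
  shows "dirderiv (\<lambda>q. ln \<bar>f q * h q\<bar>) X p =
         dirderiv (\<lambda>q. ln \<bar>f q\<bar>) X p + dirderiv (\<lambda>q. ln \<bar>h q\<bar>) X p"
proof -
  have "(\<lambda>q. f q * h q) differentiable (at p)"
    using assms(1,2) by (rule differentiable_mult)
  then have "dirderiv (\<lambda>q. ln \<bar>f q * h q\<bar>) X p = dirderiv (\<lambda>q. f q * h q) X p / (f p * h p)"
    using assms(3,4) by (simp add: dirderiv_ln_abs)
  also have "\<dots> = dirderiv f X p / f p + dirderiv h X p / h p"
    using assms by (simp add: dirderiv_mult add_divide_distrib)
  finally show ?thesis
    using assms by (simp add: dirderiv_ln_abs)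
qed

lemma dirderiv_ln_abs_mult3:
  fixes f h k :: "real^3 \<Rightarrow> real"
  assumes "f differentiable (at p)" "h differentiable (at p)" "k differentiable (at p)"
    and "f p \<noteq> 0" "h p \<noteq> 0" "k p \<noteq> 0"
  shows "dirderiv (\<lambda>q. ln \<bar>f q * h q * k q\<bar>) X p =
         dirderiv (\<lambda>q. ln \<bar>f q\<bar>) X p + dirderiv (\<lambda>q. ln \<bar>h q\<bar>) X p + dirderiv (\<lambda>q. ln \<bar>k q\<bar>) X p"
  using dirderiv_ln_abs_mult[OF differentiable_mult[OF assms(1,2)] assms(3) _ assms(6)]
    dirderiv_ln_abs_mult[OF assms(1,2,4,5)] assms(4,5) by simp

lemma dirderiv_ln_abs_riccati_difference:
  fixes \<mu>1 \<mu>2 :: "real^3 \<Rightarrow> real"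
  assumes "\<mu>1 differentiable (at p)" "\<mu>2 differentiable (at p)" "\<mu>1 p \<noteq> \<mu>2 p"
    and "dirderiv \<mu>1 X p = - a - \<mu>1 p * b - (\<mu>1 p)\<^sup>2 * c"
    and "dirderiv \<mu>2 X p = - a - \<mu>2 p * b - (\<mu>2 p)\<^sup>2 * c"
  shows "dirderiv (\<lambda>q. ln \<bar>\<mu>2 q - \<mu>1 q\<bar>) X p = - b - (\<mu>1 p + \<mu>2 p) * c"
proof -
  have "dirderiv (\<lambda>q. \<mu>2 q - \<mu>1 q) X p = (\<mu>2 p - \<mu>1 p) * (- b - (\<mu>1 p + \<mu>2 p) * c)"
    using assms by (simp add: dirderiv_diff algebra_simps power2_eq_square)
  then show ?thesis
    using assms(1-3) by (simp add: dirderiv_ln_abs differentiable_diff)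
qed

lemma differentiable_vec_nth:
  fixes f :: "'a::real_normed_vector \<Rightarrow> 'b::real_normed_vector^'n"
  assumes "f differentiable (at p)"
  shows "(\<lambda>q. f q $ i) differentiable (at p)"
proof -
  obtain F where "(f has_derivative F) (at p)"
    using assms differentiable_def by blast
  from bounded_linear.has_derivative[OF bounded_linear_vec_nth this]
  show ?thesis unfolding differentiable_def by blast
qed

lemma gip_eq_sum:
  "gip g q X Y = (\<Sum>i\<in>UNIV. X $ i * (\<Sum>j\<in>UNIV. g q $ i $ j * Y $ j))"
  unfolding gip_def inner_vec_def matrix_vector_mult_def by simp

lemma gnorm_pos:
  assumes "riemannian_metric U g" "p \<in> U" "x \<noteq> 0"
  shows "0 < gnorm g p x"
  using assms unfolding riemannian_metric_def gnorm_def by simp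

lemma differentiable_gnorm:
  fixes g :: "real^3 \<Rightarrow> real^3^3" and v :: "real^3 \<Rightarrow> real^3"
  assumes "riemannian_metric U g" "p \<in> U" "v differentiable (at p)" "v p \<noteq> 0"
  shows "(\<lambda>q. gnorm g q (v q)) differentiable (at p)"
proof -
  have "g differentiable (at p)"
    using assms unfolding riemannian_metric_def by blast
  then have "\<And>i j. (\<lambda>q. g q $ i $ j) differentiable (at p)" "\<And>i. (\<lambda>q. v q $ i) differentiable (at p)"
    using assms(3) by (auto intro: differentiable_vec_nth)
  then have "(\<lambda>q. gip g q (v q) (v q)) differentiable (at p)"
    unfolding gip_eq_sum by (intro differentiable_sum differentiable_mult ballI finite)
  then obtain G where G: "((\<lambda>q. gip g q (v q) (v q)) has_derivative G) (at p)"
    unfolding differentiable_def by blast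
  have "0 < gip g p (v p) (v p)"
    using assms unfolding riemannian_metric_def by blast
  from has_derivative_real_sqrt[OF this G] show ?thesis
    unfolding gnorm_def differentiable_def by blast
qed

lemma flat_inner_frame:
  assumes orth: "\<forall>i\<in>{1,2,3}. \<forall>j\<in>{1,2,3}. gip g q (E i q) (E j q) = (if i = j then 1 else 0)"
    and J: "J q = a *\<^sub>R (E 2 q + m *\<^sub>R E 3 q)"
    and k: "k \<in> {1,2,3::nat}"
  shows "flat g J q \<bullet> E k q = a * ((if k = 2 then 1 else 0) + m * (if k = 3 then 1 else 0))"
proof -
  have "flat g J q \<bullet> E k q = a * (gip g q (E k q) (E 2 q) + m * gip g q (E k q) (E 3 q))"
    unfolding flat_def gip_def J by (simp add: inner_commute algebra_simps)
  moreover have "gip g q (E k q) (E 2 q) = (if k = 2 then 1 else 0)"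
    and "gip g q (E k q) (E 3 q) = (if k = 3 then 1 else 0)"
    using orth k by auto
  ultimately show ?thesis by simp
qed

lemma structure_equation_on_e1_e2:
  fixes g :: "real^3 \<Rightarrow> real^3^3" and E :: "nat \<Rightarrow> real^3 \<Rightarrow> real^3"
    and \<alpha> \<mu> :: "real^3 \<Rightarrow> real" and J \<beta> :: "real^3 \<Rightarrow> real^3" and C :: "nat \<Rightarrow> real"
  assumes U: "open U" "p \<in> U"
    and E_diff: "\<forall>q\<in>U. E 1 differentiable (at q) \<and> E 2 differentiable (at q)"
    and orth: "\<forall>q\<in>U. \<forall>i\<in>{1,2,3}. \<forall>j\<in>{1,2,3}.
                 gip g q (E i q) (E j q) = (if i = j then 1 else 0)"
    and bracket: "lie_bracket (E 1) (E 2) p = (\<Sum>k\<in>{1,2,3}. C k *\<^sub>R E k p)"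
    and J: "\<forall>q\<in>U. J q = \<alpha> q *\<^sub>R (E 2 q + \<mu> q *\<^sub>R E 3 q)"
    and \<alpha>: "\<alpha> differentiable (at p)" "\<alpha> p \<noteq> 0"
    and \<beta>: "dform_eq_wedge U (flat g J) \<beta>"
  shows "\<beta> p \<bullet> E 1 p = dirderiv \<alpha> (E 1) p / \<alpha> p - C 2 - \<mu> p * C 3"
proof -
  have J_frame: "flat g J q \<bullet> E k q = \<alpha> q * ((if k = 2 then 1 else 0) + \<mu> q * (if k = 3 then 1 else 0))"
    if "q \<in> U" "k \<in> {1,2,3}" for q k
    using that orth J by (intro flat_inner_frame) auto
  have J_e1: "q \<in> U \<Longrightarrow> flat g J q \<bullet> E 1 q = 0"
    and J_e2: "q \<in> U \<Longrightarrow> flat g J q \<bullet> E 2 q = \<alpha> q" for q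
    using J_frame by simp_all
  have "dirderiv (\<lambda>q. flat g J q \<bullet> E 2 q) (E 1) p = dirderiv \<alpha> (E 1) p"
    by (rule dirderiv_transform_within_open[OF \<alpha>(1) U]) (simp add: J_e2)
  moreover have "dirderiv (\<lambda>q. flat g J q \<bullet> E 1 q) (E 2) p = dirderiv (\<lambda>q. 0) (E 2) p"
    by (rule dirderiv_transform_within_open[OF differentiable_const U]) (metis J_e1)
  moreover have "flat g J p \<bullet> lie_bracket (E 1) (E 2) p = \<alpha> p * (C 2 + \<mu> p * C 3)"
  proof -
    have "flat g J p \<bullet> lie_bracket (E 1) (E 2) p = (\<Sum>k\<in>{1,2,3}. C k * (flat g J p \<bullet> E k p))"
      unfolding bracket by (simp add: inner_sum_right inner_add_right)
    also have "\<dots> = \<alpha> p * (C 2 + \<mu> p * C 3)"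
      using J_frame[OF U(2), of 1] J_frame[OF U(2), of 2] J_frame[OF U(2), of 3]
      by (simp add: algebra_simps)
    finally show ?thesis .
  qed
  moreover have "d1 (flat g J) (E 1) (E 2) p = wedge1 \<beta> (flat g J) (E 1) (E 2) p"
    using \<beta> E_diff U(2) unfolding dform_eq_wedge_def by blast
  ultimately have "dirderiv \<alpha> (E 1) p - \<alpha> p * (C 2 + \<mu> p * C 3) = (\<beta> p \<bullet> E 1 p) * \<alpha> p"
    using J_e1 J_e2 U(2) unfolding d1_def wedge1_def by (simp add: dirderiv_def)
  then show ?thesis
    using \<alpha>(2) by (simp add: field_simps)
qed

theorem lemma2:
  fixes U :: "(real^3) set"
    and g :: "real^3 \<Rightarrow> real^3^3"
    and v :: "real^3 \<Rightarrow> real^3"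
    and E :: "nat \<Rightarrow> real^3 \<Rightarrow> real^3"
    and C :: "nat \<Rightarrow> nat \<Rightarrow> nat \<Rightarrow> real^3 \<Rightarrow> real"
    and \<mu>1 \<mu>2 \<alpha>1 \<alpha>2 :: "real^3 \<Rightarrow> real"
    and J1 J2 \<beta> :: "real^3 \<Rightarrow> real^3"
  assumes U_open: "open U"
    and metric: "riemannian_metric U g"
    and v_diff: "\<forall>p\<in>U. v differentiable (at p)"
    and v_nz: "\<forall>p\<in>U. v p \<noteq> 0"
    and E_diff: "\<forall>i\<in>{1,2,3}. \<forall>p\<in>U. E i differentiable (at p)"
    and E_on: "\<forall>p\<in>U. \<forall>i\<in>{1,2,3}. \<forall>j\<in>{1,2,3}.
                 gip g p (E i p) (E j p) = (if i = j then 1 else 0)"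
    and E1: "\<forall>p\<in>U. E 1 p = (1 / gnorm g p (v p)) *\<^sub>R v p"
    and E3: "\<forall>p\<in>U. E 3 p = gcross g p (E 1 p) (E 2 p)"
    and C_def: "\<forall>p\<in>U. \<forall>i\<in>{1,2,3}. \<forall>j\<in>{1,2,3}.
                 lie_bracket (E i) (E j) p = (\<Sum>k\<in>{1,2,3}. C i j k p *\<^sub>R E k p)"
    and mu_diff: "\<forall>p\<in>U. \<mu>1 differentiable (at p) \<and> \<mu>2 differentiable (at p)"
    and alpha_diff: "\<forall>p\<in>U. \<alpha>1 differentiable (at p) \<and> \<alpha>2 differentiable (at p)"
    and mu_neq: "\<forall>p\<in>U. \<mu>1 p \<noteq> \<mu>2 p"
    and alpha_nz: "\<forall>p\<in>U. \<alpha>1 p \<noteq> 0 \<and> \<alpha>2 p \<noteq> 0"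
    and mu1_ode: "\<forall>p\<in>U. dirderiv \<mu>1 (E 1) p =
                   - C 3 1 2 p - \<mu>1 p * (C 3 1 3 p + C 1 2 2 p) - (\<mu>1 p)^2 * C 1 2 3 p"
    and mu2_ode: "\<forall>p\<in>U. dirderiv \<mu>2 (E 1) p =
                   - C 3 1 2 p - \<mu>2 p * (C 3 1 3 p + C 1 2 2 p) - (\<mu>2 p)^2 * C 1 2 3 p"
    and alpha1_ode: "\<forall>p\<in>U. dirderiv (\<lambda>q. ln \<bar>\<alpha>1 q / gnorm g q (v q)\<bar>) (E 1) p =
                   C 3 1 3 p + \<mu>1 p * C 1 2 3 p"
    and alpha2_ode: "\<forall>p\<in>U. dirderiv (\<lambda>q. ln \<bar>\<alpha>2 q / gnorm g q (v q)\<bar>) (E 1) p =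
                   C 3 1 3 p + \<mu>2 p * C 1 2 3 p"
    and J1_def: "\<forall>p\<in>U. J1 p = \<alpha>1 p *\<^sub>R (E 2 p + \<mu>1 p *\<^sub>R E 3 p)"
    and J2_def: "\<forall>p\<in>U. J2 p = \<alpha>2 p *\<^sub>R (E 2 p + \<mu>2 p *\<^sub>R E 3 p)"
    and beta1: "dform_eq_wedge U (flat g J1) \<beta>"
    and beta2: "dform_eq_wedge U (flat g J2) \<beta>"
  shows "\<forall>p\<in>U. \<beta> p \<bullet> E 1 p =
           dirderiv (\<lambda>q. ln \<bar>\<alpha>1 q * \<alpha>2 q * (\<mu>2 q - \<mu>1 q) / gnorm g q (v q)\<bar>) (E 1) p"
proof
  fix p assume p: "p \<in> U"
  define \<psi> where "\<psi> q = \<alpha>2 q / gnorm g q (v q)" for q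
  have \<psi>: "\<psi> differentiable (at p)" "\<psi> p \<noteq> 0"
    using alpha_diff alpha_nz p differentiable_gnorm[OF metric p] gnorm_pos[OF metric p] v_diff v_nz
    unfolding \<psi>_def by (auto intro!: differentiable_divide simp: less_imp_neq[symmetric])
  have \<alpha>1: "\<alpha>1 differentiable (at p)" "\<alpha>1 p \<noteq> 0"
    and \<delta>: "(\<lambda>q. \<mu>2 q - \<mu>1 q) differentiable (at p)" "\<mu>2 p - \<mu>1 p \<noteq> 0"
    using alpha_diff alpha_nz mu_diff mu_neq p by (auto intro: differentiable_diff)
  have "(\<lambda>q. ln \<bar>\<alpha>1 q * \<alpha>2 q * (\<mu>2 q - \<mu>1 q) / gnorm g q (v q)\<bar>) =
        (\<lambda>q. ln \<bar>\<alpha>1 q * \<psi> q * (\<mu>2 q - \<mu>1 q)\<bar>)"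
    by (simp add: \<psi>_def)
  then have "dirderiv (\<lambda>q. ln \<bar>\<alpha>1 q * \<alpha>2 q * (\<mu>2 q - \<mu>1 q) / gnorm g q (v q)\<bar>) (E 1) p =
        dirderiv (\<lambda>q. ln \<bar>\<alpha>1 q\<bar>) (E 1) p + dirderiv (\<lambda>q. ln \<bar>\<psi> q\<bar>) (E 1) p
          + dirderiv (\<lambda>q. ln \<bar>\<mu>2 q - \<mu>1 q\<bar>) (E 1) p"
    using dirderiv_ln_abs_mult3[OF \<alpha>1(1) \<psi>(1) \<delta>(1) \<alpha>1(2) \<psi>(2) \<delta>(2)] by simp
  also have "dirderiv (\<lambda>q. ln \<bar>\<alpha>1 q\<bar>) (E 1) p = dirderiv \<alpha>1 (E 1) p / \<alpha>1 p"
    using \<alpha>1 by (rule dirderiv_ln_abs)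
  also have "dirderiv (\<lambda>q. ln \<bar>\<psi> q\<bar>) (E 1) p = C 3 1 3 p + \<mu>2 p * C 1 2 3 p"
    using alpha2_ode p by (simp add: \<psi>_def)
  also have "dirderiv (\<lambda>q. ln \<bar>\<mu>2 q - \<mu>1 q\<bar>) (E 1) p =
             - (C 3 1 3 p + C 1 2 2 p) - (\<mu>1 p + \<mu>2 p) * C 1 2 3 p"
    using mu_diff mu_neq mu1_ode mu2_ode p by (simp add: dirderiv_ln_abs_riccati_difference)
  finally show "\<beta> p \<bullet> E 1 p = dirderiv (\<lambda>q. ln \<bar>\<alpha>1 q * \<alpha>2 q * (\<mu>2 q - \<mu>1 q) / gnorm g q (v q)\<bar>) (E 1) p"
    using structure_equation_on_e1_e2[OF U_open p _ E_on _ J1_def, of "\<lambda>k. C 1 2 k p" \<beta>]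
          E_diff C_def \<alpha>1 p beta1
    by (simp add: algebra_simps)
qed

end
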